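(* Let $(\mathcal V,\mathcal W,\lambda)$ be a FTvN system with $\dim(\mathcal V)\ge2$, and let $C$ be its center. Then $C=\{0\}$ under either of the following conditions: (i) for $x,y\in\mathcal V$, $\langle\lambda(x),\lambda(y)\rangle=0$ implies $x=0$ or $y=0$; (ii) for $x,y\in\mathcal V$, $0=\langle x,y\rangle=\langle\lambda(x),\lambda(y)\rangle$ implies $x=0$ or $y=0$.
   Context: A Fan-Theobald-von Neumann (FTvN) system is a triple $(\mathcal V,\mathcal W,\lambda)$ where $\mathcal V,\mathcal W$ are real inner product spaces and $\lambda:\mathcal V\to\mathcal W$ is a map such that: (A1) $\|\lambda(x)\|=\|x\|$ for all $x$; (A2) $\langle x,y\rangle\le\langle\lambda(x),\lambda(y)\rangle$ for all $x,y$; (A3) for every $c\in\mathcal V$ and $q\in\lambda(\mathcal V)$ there exists $x$ with $\lambda(x)=q$ and $\langle c,x\rangle=\langle\lambda(c),\lambda(x)\rangle$. Elements $x,y$ commute if $\langle x,y\rangle=\langle\lambda(x),\lambda(y)\rangle$; the center $C$ is the set of elements commuting with every element of $\mathcal V$. *)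

theory Defs
  imports "HOL-Analysis.Analysis"
begin

definition FTvN :: "('v::real_inner \<Rightarrow> 'w::real_inner) \<Rightarrow> bool" where
  "FTvN lam \<longleftrightarrow>
     (\<forall>x. norm (lam x) = norm x) \<and>
     (\<forall>x y. inner x y \<le> inner (lam x) (lam y)) \<and>
     (\<forall>c q. q \<in> range lam \<longrightarrow> (\<exists>x. lam x = q \<and> inner c x = inner (lam c) (lam x)))"

definition commute :: "('v::real_inner \<Rightarrow> 'w::real_inner) \<Rightarrow> 'v \<Rightarrow> 'v \<Rightarrow> bool" where
  "commute lam x y \<longleftrightarrow> inner x y = inner (lam x) (lam y)"

definition center :: "('v::real_inner \<Rightarrow> 'w::real_inner) \<Rightarrow> 'v set" where
  "center lam = {c. \<forall>x. commute lam c x}"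

end

theory Submission
  imports Defs
begin

(* A central element c commutes with every x, so any x orthogonal to c also has
   <lam c, lam x> = 0. When dim V >= 2 some nonzero x is orthogonal to c, and
   condition (ii), which is implied by (i), then forces c = 0. *)

lemma FTvN_zero:
  assumes "FTvN lam"
  shows "lam 0 = 0"
  using assms unfolding FTvN_def by (metis norm_eq_zero)

lemma zero_in_center:
  assumes "FTvN lam"
  shows "0 \<in> center lam"
  using FTvN_zero[OF assms] unfolding center_def commute_def by simp

lemma center_commute_orthogonal:
  assumes "c \<in> center lam" "inner c x = 0"
  shows "inner (lam c) (lam x) = 0"
  using assms unfolding center_def commute_def by simp

lemma exists_nonzero_orthogonal:
  fixes a b c :: "'a::real_inner"
  assumes "a \<noteq> b" "independent {a, b}"
  obtains x where "x \<noteq> 0" "inner c x = 0"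
proof (cases "inner c b = 0")
  case True
  moreover have "b \<noteq> 0"
    using assms(2) by (auto simp: dependent_zero)
  ultimately show ?thesis using that by blast
next
  case False
  let ?x = "a - (inner c a / inner c b) *\<^sub>R b"
  have "a \<notin> span {b}"
    using assms by (simp add: independent_insert)
  then have "?x \<noteq> 0"
    by (metis eq_iff_diff_eq_0 span_base span_mul singletonI)
  moreover have "inner c ?x = 0"
    using False by (simp add: inner_diff_right)
  ultimately show ?thesis using that by blast
qed

lemma center_eq_zero_if_no_orthogonal_commuting_pair:
  fixes lam :: "'v::real_inner \<Rightarrow> 'w::real_inner"
  assumes "FTvN lam"
    and "a \<noteq> b" "independent {a, b::'v}"
    and trivial: "\<And>x y. inner x y = 0 \<Longrightarrow> inner (lam x) (lam y) = 0 \<Longrightarrow> x = 0 \<or> y = 0"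
  shows "center lam = {0}"
proof -
  have "c = 0" if "c \<in> center lam" for c
  proof -
    obtain x where "x \<noteq> 0" "inner c x = 0"
      using exists_nonzero_orthogonal[OF assms(2,3)] by blast
    with \<open>c \<in> center lam\<close> show "c = 0"
      using trivial center_commute_orthogonal by blast
  qed
  with zero_in_center[OF assms(1)] show ?thesis by blast
qed

theorem proposition6p8:
  fixes lam :: "'v::real_inner \<Rightarrow> 'w::real_inner"
  assumes "FTvN lam"
    and "\<exists>a b::'v. a \<noteq> b \<and> independent {a, b}"
    and "(\<forall>x y. inner (lam x) (lam y) = 0 \<longrightarrow> x = 0 \<or> y = 0)
       \<or> (\<forall>x y. inner x y = 0 \<and> inner (lam x) (lam y) = 0 \<longrightarrow> x = 0 \<or> y = 0)"
  shows "center lam = {0}"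
proof -
  obtain a b :: 'v where "a \<noteq> b" "independent {a, b}"
    using assms(2) by blast
  moreover have "\<And>x y. inner x y = 0 \<Longrightarrow> inner (lam x) (lam y) = 0 \<Longrightarrow> x = 0 \<or> y = 0"
    using assms(3) by blast
  ultimately show ?thesis
    using center_eq_zero_if_no_orthogonal_commuting_pair[OF assms(1)] by blast
qed

end
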